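(* Let $q\in\mathbb{N}$, and for $i=1,\dots,q$ let $f_i:\mathbb{R}^{n_i}\to\mathbb{R}\cup\{+\infty\}$ be proper, closed, convex and $A_i\in\mathbb{R}^{p\times n_i}$; let $c\in\mathbb{R}^p$. Consider $\min\sum_{i=1}^q f_i(x_i)$ subject to $\sum_{i=1}^qA_ix_i=c$, and assume that $\mathcal{L}_0(x_1,\dots,x_q,y)=\sum_i f_i(x_i)+y^T(\sum_iA_ix_i-c)$ has a saddle point. Let $\tilde M_0$ be the block matrix whose $(i,j)$ blocks for $1\le i,j\le q$ are zero, whose $(i,q+1)$ block is $A_i^T$, whose $(q+1,j)$ block is $-A_j$, and whose $(q+1,q+1)$ block is $0_{p\times p}$. Let $\tilde L>0$ with $\|\tilde M_0\|_2\le\tilde L$ and $\eta\in(0,\frac{1}{2\tilde L})$. For arbitrary initial points $x_{i,0},x_{i,-1}\in\mathbb{R}^{n_i}$, $y_0,y_{-1}\in\mathbb{R}^p$, define for $k\ge0$ and $i=1,\dots,q$: $$\hat x_{i,k}=x_{i,k}-2\eta A_i^Ty_k+\eta A_i^Ty_{k-1},\qquad x_{i,k+1}=\arg\min_{u_i\in\mathbb{R}^{n_i}}\Big(\eta f_i(u_i)+\tfrac12\|u_i-\hat x_{i,k}\|_2^2\Big),$$ $$y_{k+1}=y_k+2\eta\sum_{i=1}^qA_ix_{i,k}-\eta\sum_{i=1}^qA_ix_{i,k-1}-\eta c.$$ Then each $\{x_{i,k}\}$ converges, and the limit $(x_1^*,\dots,x_q^* )$ solves the optimization problem.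
   Context: $\|\cdot\|_2$ denotes the Euclidean norm on vectors and the spectral norm (largest singular value) on matrices. *)

theory Defs
  imports Complex_Main "HOL-Library.Extended_Real"
begin

text \<open>A vector of R^n is represented as a function nat => real that
vanishes at all indices >= n (coordinates 0..n-1). A real p x n matrix is a
function nat => nat => real, of which only the entries (r,s) with r<p, s<n are used.\<close>

definition inR :: "nat \<Rightarrow> (nat \<Rightarrow> real) \<Rightarrow> bool" where
  "inR n x \<longleftrightarrow> (\<forall>j\<ge>n. x j = 0)"

definition mat_vec :: "nat \<Rightarrow> nat \<Rightarrow> (nat \<Rightarrow> nat \<Rightarrow> real) \<Rightarrow> (nat \<Rightarrow> real) \<Rightarrow> (nat \<Rightarrow> real)" where
  "mat_vec m n M v = (\<lambda>r. if r < m then (\<Sum>s<n. M r s * v s) else 0)"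

definition transp :: "(nat \<Rightarrow> nat \<Rightarrow> real) \<Rightarrow> (nat \<Rightarrow> nat \<Rightarrow> real)" where
  "transp M = (\<lambda>r s. M s r)"

definition vnorm :: "nat \<Rightarrow> (nat \<Rightarrow> real) \<Rightarrow> real" where
  "vnorm n x = sqrt (\<Sum>j<n. (x j)\<^sup>2)"

definition vinner :: "nat \<Rightarrow> (nat \<Rightarrow> real) \<Rightarrow> (nat \<Rightarrow> real) \<Rightarrow> real" where
  "vinner n x y = (\<Sum>j<n. x j * y j)"

definition spec_norm :: "nat \<Rightarrow> nat \<Rightarrow> (nat \<Rightarrow> nat \<Rightarrow> real) \<Rightarrow> real" where
  "spec_norm m n M = Sup {vnorm m (mat_vec m n M v) | v. inR n v \<and> vnorm n v \<le> 1}"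

definition proper_fn :: "nat \<Rightarrow> ((nat \<Rightarrow> real) \<Rightarrow> ereal) \<Rightarrow> bool" where
  "proper_fn n f \<longleftrightarrow> (\<forall>x. inR n x \<longrightarrow> f x \<noteq> -\<infinity>) \<and> (\<exists>x. inR n x \<and> f x \<noteq> \<infinity>)"

definition convex_fn :: "nat \<Rightarrow> ((nat \<Rightarrow> real) \<Rightarrow> ereal) \<Rightarrow> bool" where
  "convex_fn n f \<longleftrightarrow> (\<forall>x y t. inR n x \<longrightarrow> inR n y \<longrightarrow> 0 < t \<longrightarrow> t < 1 \<longrightarrow>
      f (\<lambda>j. t * x j + (1 - t) * y j) \<le> ereal t * f x + ereal (1 - t) * f y)"

text \<open>closed = lower semicontinuous (equivalently: closed epigraph)\<close>
definition closed_fn :: "nat \<Rightarrow> ((nat \<Rightarrow> real) \<Rightarrow> ereal) \<Rightarrow> bool" where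
  "closed_fn n f \<longleftrightarrow> (\<forall>x u. inR n x \<longrightarrow> (\<forall>k. inR n (u k)) \<longrightarrow>
      (\<forall>j<n. (\<lambda>k. u k j) \<longlonglongrightarrow> x j) \<longrightarrow> f x \<le> liminf (\<lambda>k. f (u k)))"

text \<open>Block structure: blocks 1..q of sizes n 1, ..., n q, followed by a block of size p.\<close>
definition blk_off :: "(nat \<Rightarrow> nat) \<Rightarrow> nat \<Rightarrow> nat" where
  "blk_off n i = (\<Sum>j\<in>{1..<i}. n j)"

definition blk_of :: "nat \<Rightarrow> (nat \<Rightarrow> nat) \<Rightarrow> nat \<Rightarrow> nat" where
  "blk_of q n r = (THE i. i \<in> {1..q} \<and> blk_off n i \<le> r \<and> r < blk_off n i + n i)"

text \<open>The (N+p) x (N+p) block matrix tilde M_0, N = n_1 + ... + n_q: blocks (i,j) zero,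
  block (i,q+1) = A_i^T, block (q+1,j) = -A_j, block (q+1,q+1) = 0.\<close>
definition M0 :: "nat \<Rightarrow> (nat \<Rightarrow> nat) \<Rightarrow> nat \<Rightarrow> (nat \<Rightarrow> nat \<Rightarrow> nat \<Rightarrow> real) \<Rightarrow> (nat \<Rightarrow> nat \<Rightarrow> real)" where
  "M0 q n p A = (\<lambda>r s. let N = blk_off n (q+1) in
     if r < N \<and> N \<le> s \<and> s < N + p then
        (let i = blk_of q n r in transp (A i) (r - blk_off n i) (s - N))
     else if N \<le> r \<and> r < N + p \<and> s < N then
        (let j = blk_of q n s in - A j (r - N) (s - blk_off n j))
     else 0)"

end

(* Stack the iterates into z(k) = (x(1,k), ..., x(q,k), y(k)). The scheme is the
   forward-reflected-backward splitting z(k+1) = J(z(k) - eta (2 M0 z(k) - M0 z(k-1))) for the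
   inclusion 0 in F z + M0 z, where F is the subdifferential of (x, y) -> sum_i f_i(x_i) + <c, y>
   and M0 is skew-symmetric; the zeros of F + M0 are the KKT points, and a saddle point is one.
   For any zero z*, the quantity
     |z(k) - z*|^2 - 2 eta <M0 (z(k) - z(k-1)), z(k) - z*> + eta L |z(k) - z(k-1)|^2
   is at least (1 - eta L) |z(k) - z*|^2 and decreases by (1 - 2 eta L) |z(k+1) - z(k)|^2 per step.
   So the iterates are bounded, consecutive differences vanish and |z(k) - z*| converges.
   By closedness of the f_i every cluster point is a KKT point, Opial's argument gives convergence
   of the whole sequence to it, and KKT points solve the problem. *)

theory Submission
  imports Defs "HOL-Analysis.Analysis"
begin

section \<open>Euclidean vectors as coordinate functions\<close>

lemma vnorm_eq_L2_set: "vnorm m x = L2_set x {..<m}"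
  by (simp add: vnorm_def L2_set_def)

lemma vnorm_nonneg: "vnorm m x \<ge> 0"
  by (simp add: vnorm_def sum_nonneg)

lemma vnorm_power2: "(vnorm m x)\<^sup>2 = vinner m x x"
  by (simp add: vnorm_def vinner_def power2_eq_square sum_nonneg)

lemma vnorm_eq_sqrt_vinner: "vnorm m x = sqrt (vinner m x x)"
  by (simp add: vnorm_def vinner_def power2_eq_square)

lemma vinner_self_nonneg: "vinner m x x \<ge> 0"
  by (simp add: vinner_def sum_nonneg)

lemma vinner_commute: "vinner m x y = vinner m y x"
  by (simp add: vinner_def mult.commute)

lemma abs_vinner_le_vnorm_mult: "\<bar>vinner m x y\<bar> \<le> vnorm m x * vnorm m y"
proof -
  have "\<bar>vinner m x y\<bar> \<le> (\<Sum>i<m. \<bar>x i\<bar> * \<bar>y i\<bar>)"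
    using sum_abs[of "\<lambda>i. x i * y i" "{..<m}"] by (simp add: abs_mult vinner_def)
  also have "\<dots> \<le> vnorm m x * vnorm m y"
    unfolding vnorm_eq_L2_set by (rule L2_set_mult_ineq)
  finally show ?thesis .
qed

lemma abs_coord_le_vnorm: "j < m \<Longrightarrow> \<bar>x j\<bar> \<le> vnorm m x"
proof -
  assume "j < m"
  then have "\<bar>x j\<bar> \<le> L2_set (\<lambda>i. \<bar>x i\<bar>) {..<m}" by (intro member_le_L2_set) auto
  then show ?thesis by (simp add: vnorm_eq_L2_set L2_set_def)
qed

lemma abs_coord_diff_le: "r < m \<Longrightarrow> \<bar>U r - V r\<bar> \<le> sqrt (vinner m (\<lambda>j. U j - V j) (\<lambda>j. U j - V j))"
  using abs_coord_le_vnorm[of r m "\<lambda>j. U j - V j"] by (simp add: vnorm_eq_sqrt_vinner)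

lemma coord_eq_0_if_vinner_self_le_0: "vinner m x x \<le> 0 \<Longrightarrow> j < m \<Longrightarrow> x j = 0"
  using abs_coord_le_vnorm[of j m x] vinner_self_nonneg[of m x] by (simp add: vnorm_eq_sqrt_vinner)

lemma vinner_diff_left: "vinner m (\<lambda>j. a j - b j) c = vinner m a c - vinner m b c"
  by (simp add: vinner_def sum_subtractf algebra_simps)
lemma vinner_add_left: "vinner m (\<lambda>j. a j + b j) c = vinner m a c + vinner m b c"
  by (simp add: vinner_def sum.distrib algebra_simps)
lemma vinner_scale_left: "vinner m (\<lambda>j. t * a j) c = t * vinner m a c"
  by (simp add: vinner_def sum_distrib_left algebra_simps)
lemma vinner_diff_right: "vinner m c (\<lambda>j. a j - b j) = vinner m c a - vinner m c b"
  by (simp add: vinner_def sum_subtractf algebra_simps)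
lemma vinner_add_right: "vinner m c (\<lambda>j. a j + b j) = vinner m c a + vinner m c b"
  by (simp add: vinner_def sum.distrib algebra_simps)
lemma vinner_scale_right: "vinner m c (\<lambda>j. t * a j) = t * vinner m c a"
  by (simp add: vinner_def sum_distrib_left algebra_simps)
lemmas vinner_linear = vinner_diff_left vinner_add_left vinner_scale_left
  vinner_diff_right vinner_add_right vinner_scale_right

lemma vnorm_scale: "vnorm m (\<lambda>j. t * x j) = \<bar>t\<bar> * vnorm m x"
proof -
  have "(\<Sum>j<m. (t * x j)\<^sup>2) = t\<^sup>2 * (\<Sum>j<m. (x j)\<^sup>2)"
    by (simp add: sum_distrib_left power_mult_distrib)
  then show ?thesis unfolding vnorm_def by (simp add: real_sqrt_mult)
qed

lemma vnorm_cong: "(\<And>j. j < m \<Longrightarrow> x j = y j) \<Longrightarrow> vnorm m x = vnorm m y"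
  unfolding vnorm_def by simp

lemma mat_vec_cong: "(\<And>j. j < b \<Longrightarrow> x j = y j) \<Longrightarrow> mat_vec a b M x = mat_vec a b M y"
  unfolding mat_vec_def by (auto intro!: sum.cong)

lemma mat_vec_diff: "mat_vec a b M (\<lambda>j. u j - v j) = (\<lambda>r. mat_vec a b M u r - mat_vec a b M v r)"
  by (auto simp: mat_vec_def sum_subtractf algebra_simps)

lemma mat_vec_scale: "mat_vec a b M (\<lambda>j. t * u j) = (\<lambda>r. t * mat_vec a b M u r)"
  by (auto simp: mat_vec_def sum_distrib_left algebra_simps)

lemma vinner_mat_vec_transp: "vinner p y (mat_vec p m A x) = vinner m (mat_vec m p (transp A) y) x"
proof -
  have "vinner p y (mat_vec p m A x) = (\<Sum>r<p. \<Sum>s<m. y r * A r s * x s)"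
    unfolding vinner_def mat_vec_def by (simp add: sum_distrib_left mult.assoc)
  also have "\<dots> = (\<Sum>s<m. \<Sum>r<p. y r * A r s * x s)" by (rule sum.swap)
  also have "\<dots> = vinner m (mat_vec m p (transp A) y) x"
    unfolding vinner_def mat_vec_def transp_def
    by (simp add: sum_distrib_left mult.commute mult.left_commute)
  finally show ?thesis .
qed

lemma sum_vinner_mat_vec_transp:
  "(\<Sum>i\<in>I. vinner (n i) (mat_vec (n i) p (transp (A i)) y) (X i))
     = vinner p y (\<lambda>r. \<Sum>i\<in>I. mat_vec p (n i) (A i) (X i) r)"
proof -
  have "(\<Sum>i\<in>I. vinner (n i) (mat_vec (n i) p (transp (A i)) y) (X i))
      = (\<Sum>i\<in>I. vinner p y (mat_vec p (n i) (A i) (X i)))"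
    by (simp add: vinner_mat_vec_transp)
  also have "\<dots> = vinner p y (\<lambda>r. \<Sum>i\<in>I. mat_vec p (n i) (A i) (X i) r)"
    unfolding vinner_def by (simp add: sum_distrib_left sum.swap[of _ I])
  finally show ?thesis .
qed

lemma vnorm_mat_vec_le_sum_abs:
  assumes "vnorm D w \<le> 1"
  shows "vnorm D (mat_vec D D M w) \<le> (\<Sum>r<D. \<Sum>s<D. \<bar>M r s\<bar>)"
proof -
  have "vnorm D (mat_vec D D M w) \<le> (\<Sum>r<D. \<bar>mat_vec D D M w r\<bar>)"
    unfolding vnorm_eq_L2_set by (rule L2_set_le_sum_abs)
  also have "\<dots> \<le> (\<Sum>r<D. \<Sum>s<D. \<bar>M r s\<bar>)"
  proof (rule sum_mono)
    fix r assume r: "r \<in> {..<D}"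
    have "\<bar>w s\<bar> \<le> 1" if "s < D" for s
      using abs_coord_le_vnorm[OF that, of w] assms by simp
    then have "\<bar>M r s * w s\<bar> \<le> \<bar>M r s\<bar>" if "s < D" for s
      using that by (simp add: abs_mult mult_left_le)
    then have "(\<Sum>s<D. \<bar>M r s * w s\<bar>) \<le> (\<Sum>s<D. \<bar>M r s\<bar>)" by (intro sum_mono) auto
    then show "\<bar>mat_vec D D M w r\<bar> \<le> (\<Sum>s<D. \<bar>M r s\<bar>)"
      using r order_trans[OF sum_abs[of "\<lambda>s. M r s * w s" "{..<D}"]] unfolding mat_vec_def by simp
  qed
  finally show ?thesis .
qed

lemma vnorm_mat_vec_le_spec_norm:
  assumes "spec_norm D D M \<le> L"
  shows "vnorm D (mat_vec D D M v) \<le> L * vnorm D v"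
proof (cases "vnorm D v = 0")
  case True
  then have "\<forall>j<D. v j = 0" using abs_coord_le_vnorm[of _ D v] by force
  then have "mat_vec D D M v = (\<lambda>_. 0)" by (auto simp: mat_vec_def fun_eq_iff)
  then show ?thesis using True by (simp add: vnorm_def)
next
  case False
  then have pos: "vnorm D v > 0" using vnorm_nonneg[of D v] by simp
  define S where "S = {vnorm D (mat_vec D D M v) | v. inR D v \<and> vnorm D v \<le> 1}"
  have bdd: "bdd_above S"
    unfolding S_def bdd_above_def using vnorm_mat_vec_le_sum_abs by blast
  \<comment> \<open>cut off at D so that it lies in R^D\<close>
  define w where "w = (\<lambda>j. if j < D then v j / vnorm D v else 0)"
  have mv: "mat_vec D D M w = mat_vec D D M (\<lambda>j. (1 / vnorm D v) * v j)"
    by (rule mat_vec_cong) (simp add: w_def)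
  have nw: "vnorm D w = vnorm D (\<lambda>j. (1 / vnorm D v) * v j)"
    by (rule vnorm_cong) (simp add: w_def)
  have "inR D w" unfolding inR_def w_def by simp
  moreover have "vnorm D w = 1" unfolding nw vnorm_scale using pos by simp
  ultimately have "vnorm D (mat_vec D D M w) \<le> Sup S"
    unfolding S_def by (intro cSup_upper[OF _ bdd[unfolded S_def]]) auto
  also have "Sup S \<le> L" using assms unfolding spec_norm_def S_def by simp
  finally have "vnorm D (mat_vec D D M w) \<le> L" .
  moreover have "vnorm D (mat_vec D D M w) = vnorm D (mat_vec D D M v) / vnorm D v"
    unfolding mv mat_vec_scale vnorm_scale using pos by simp
  ultimately show ?thesis using pos by (simp add: divide_le_eq mult.commute)
qed

lemma vinner_mat_vec_self_eq_0_if_skew: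
  assumes skew: "\<And>r s. M s r = - M r s"
  shows "vinner D (mat_vec D D M v) v = 0"
proof -
  define S where "S = (\<Sum>r<D. \<Sum>s<D. M r s * v s * v r)"
  have "S = (\<Sum>s<D. \<Sum>r<D. M r s * v s * v r)" unfolding S_def by (rule sum.swap)
  also have "\<dots> = (\<Sum>s<D. \<Sum>r<D. - (M s r * v r * v s))"
    using skew by (intro sum.cong refl) (metis minus_mult_left mult.assoc mult.commute)
  also have "\<dots> = - S" unfolding S_def by (simp add: sum_negf)
  finally have "S = 0" by simp
  moreover have "vinner D (mat_vec D D M v) v = S"
    unfolding S_def vinner_def mat_vec_def by (simp add: sum_distrib_right)
  ultimately show ?thesis by simp
qed

section \<open>Block vectors and the skew matrix M0\<close>

definition blk_vec :: "nat \<Rightarrow> (nat \<Rightarrow> nat) \<Rightarrow> nat \<Rightarrow> (nat \<Rightarrow> nat \<Rightarrow> real) \<Rightarrow> (nat \<Rightarrow> real) \<Rightarrow> nat \<Rightarrow> real" where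
  "blk_vec q n p X Y r =
     (if r < blk_off n (Suc q) then X (blk_of q n r) (r - blk_off n (blk_of q n r))
      else if r < blk_off n (Suc q) + p then Y (r - blk_off n (Suc q)) else 0)"

definition sub_vec :: "nat \<Rightarrow> nat \<Rightarrow> (nat \<Rightarrow> real) \<Rightarrow> nat \<Rightarrow> real" where
  "sub_vec k m Z = (\<lambda>t. if t < m then Z (k + t) else 0)"

lemma inR_sub_vec: "inR m (sub_vec k m Z)"
  by (simp add: inR_def sub_vec_def)

lemma blk_off_Suc: "1 \<le> i \<Longrightarrow> blk_off n (Suc i) = blk_off n i + n i"
  unfolding blk_off_def by (simp add: sum.atLeastLessThan_Suc)

lemma blk_off_mono: "i \<le> j \<Longrightarrow> blk_off n i \<le> blk_off n j"
  unfolding blk_off_def by (rule sum_mono2) auto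

lemma blk_off_add_le: "1 \<le> i \<Longrightarrow> i < j \<Longrightarrow> blk_off n i + n i \<le> blk_off n j"
  using blk_off_Suc[of i n] blk_off_mono[of "Suc i" j n] by simp

lemma blk_off_add_less: "i \<in> {1..q} \<Longrightarrow> t < n i \<Longrightarrow> blk_off n i + t < blk_off n (Suc q)"
  using blk_off_add_le[of i "Suc q" n] by auto

lemma ex_blk: "r < blk_off n (Suc q) \<Longrightarrow> \<exists>i\<in>{1..q}. blk_off n i \<le> r \<and> r < blk_off n i + n i"
proof (induction q)
  case 0
  then show ?case by (simp add: blk_off_def)
next
  case (Suc q)
  show ?case
  proof (cases "r < blk_off n (Suc q)")
    case True
    with Suc.IH show ?thesis by force
  next
    case False
    with Suc.prems blk_off_Suc[of "Suc q" n] show ?thesis by (intro bexI[of _ "Suc q"]) auto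
  qed
qed

lemma blk_unique:
  "1 \<le> i \<Longrightarrow> 1 \<le> j \<Longrightarrow> blk_off n i \<le> r \<Longrightarrow> r < blk_off n i + n i \<Longrightarrow>
   blk_off n j \<le> r \<Longrightarrow> r < blk_off n j + n j \<Longrightarrow> i = j"
  using blk_off_add_le[of i j n] blk_off_add_le[of j i n] by (cases i j rule: linorder_cases) auto

lemma blk_of_bounds:
  assumes "r < blk_off n (Suc q)"
  shows "blk_of q n r \<in> {1..q} \<and> blk_off n (blk_of q n r) \<le> r \<and> r < blk_off n (blk_of q n r) + n (blk_of q n r)"
proof -
  have "\<exists>!i. i \<in> {1..q} \<and> blk_off n i \<le> r \<and> r < blk_off n i + n i"
    using ex_blk[OF assms] blk_unique[of _ _ n r] by (metis atLeastAtMost_iff)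
  then show ?thesis unfolding blk_of_def by (rule theI')
qed

lemma blk_of_blk_off_add: "i \<in> {1..q} \<Longrightarrow> t < n i \<Longrightarrow> blk_of q n (blk_off n i + t) = i"
  unfolding blk_of_def by (rule the_equality) (use blk_unique[of _ i n "blk_off n i + t"] in auto)

lemma sum_lessThan_add: "(\<Sum>r<a+b. g r) = (\<Sum>r<a. g r) + (\<Sum>t<b. g (a+t::nat))"
  by (induction b) (auto simp: add.assoc)

lemma sum_lessThan_blk_off: "(\<Sum>r<blk_off n (Suc q). g r) = (\<Sum>i\<in>{1..q}. \<Sum>t<n i. g (blk_off n i + t))"
proof (induction q)
  case 0
  then show ?case by (simp add: blk_off_def)
next
  case (Suc q)
  then show ?case
    using blk_off_Suc[of "Suc q" n] by (simp add: sum_lessThan_add sum.cl_ivl_Suc)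
qed

context
  fixes q :: nat and n :: "nat \<Rightarrow> nat" and p :: nat
begin

lemma blk_vec_block: "i \<in> {1..q} \<Longrightarrow> t < n i \<Longrightarrow> blk_vec q n p X Y (blk_off n i + t) = X i t"
  unfolding blk_vec_def using blk_off_add_less[of i q t n] blk_of_blk_off_add[of i q t n] by simp

lemma blk_vec_last: "t < p \<Longrightarrow> blk_vec q n p X Y (blk_off n (Suc q) + t) = Y t"
  unfolding blk_vec_def by simp

lemma blk_vec_sub_vec:
  assumes "r < blk_off n (Suc q) + p"
  shows "blk_vec q n p (\<lambda>i. sub_vec (blk_off n i) (n i) Z) (sub_vec (blk_off n (Suc q)) p Z) r = Z r"
proof (cases "r < blk_off n (Suc q)")
  case True
  then show ?thesis using blk_of_bounds[OF True] unfolding blk_vec_def sub_vec_def by auto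
next
  case False
  then show ?thesis using assms unfolding blk_vec_def sub_vec_def by simp
qed

lemma blk_vec_diff:
  "(\<lambda>j. blk_vec q n p X1 Y1 j - blk_vec q n p X2 Y2 j) = blk_vec q n p (\<lambda>i t. X1 i t - X2 i t) (\<lambda>t. Y1 t - Y2 t)"
  by (auto simp: blk_vec_def fun_eq_iff)

lemma blk_vec_reflected_combination:
  "(\<lambda>j. blk_vec q n p X1 Y1 j - blk_vec q n p X2 Y2 j
        - e * (2 * blk_vec q n p X3 Y3 j - blk_vec q n p X4 Y4 j - blk_vec q n p X5 Y5 j))
   = blk_vec q n p (\<lambda>i t. X1 i t - X2 i t - e * (2 * X3 i t - X4 i t - X5 i t))
                   (\<lambda>t. Y1 t - Y2 t - e * (2 * Y3 t - Y4 t - Y5 t))"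
  by (auto simp: blk_vec_def fun_eq_iff)

lemma sum_lessThan_blk_vec_dim:
  "(\<Sum>r<blk_off n (Suc q) + p. g r)
     = (\<Sum>i\<in>{1..q}. \<Sum>t<n i. g (blk_off n i + t)) + (\<Sum>t<p. g (blk_off n (Suc q) + t))"
  by (simp only: sum_lessThan_add sum_lessThan_blk_off)

lemma vinner_blk_vec:
  "vinner (blk_off n (Suc q) + p) (blk_vec q n p X Y) (blk_vec q n p X' Y')
     = (\<Sum>i\<in>{1..q}. vinner (n i) (X i) (X' i)) + vinner p Y Y'"
  unfolding vinner_def sum_lessThan_blk_vec_dim by (simp add: blk_vec_block blk_vec_last)

lemma M0_skew: "M0 q n p A s r = - M0 q n p A r s"
  unfolding M0_def Let_def transp_def by auto

lemma M0_mult_blk_vec_block: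
  assumes r: "r < blk_off n (Suc q)"
  shows "mat_vec (blk_off n (Suc q) + p) (blk_off n (Suc q) + p) (M0 q n p A) (blk_vec q n p X Y) r
     = mat_vec (n (blk_of q n r)) p (transp (A (blk_of q n r))) Y (r - blk_off n (blk_of q n r))"
proof -
  define i where "i = blk_of q n r"
  have i: "i \<in> {1..q}" "blk_off n i \<le> r" "r < blk_off n i + n i"
    using blk_of_bounds[OF r] unfolding i_def by auto
  have "M0 q n p A r (blk_off n j + t) = 0" if "j \<in> {1..q}" "t < n j" for j t
    using r blk_off_add_less[of j q t n, OF that] unfolding M0_def Let_def by auto
  then have "mat_vec (blk_off n (Suc q) + p) (blk_off n (Suc q) + p) (M0 q n p A) (blk_vec q n p X Y) r
      = (\<Sum>t<p. M0 q n p A r (blk_off n (Suc q) + t) * Y t)"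
    using r unfolding mat_vec_def sum_lessThan_blk_vec_dim by (simp add: blk_vec_last)
  also have "\<dots> = (\<Sum>t<p. A i t (r - blk_off n i) * Y t)"
    using r unfolding M0_def Let_def transp_def i_def by simp
  finally show ?thesis
    using i unfolding i_def[symmetric] mat_vec_def transp_def by auto
qed

lemma M0_mult_blk_vec_last:
  assumes "blk_off n (Suc q) \<le> r" "r < blk_off n (Suc q) + p"
  shows "mat_vec (blk_off n (Suc q) + p) (blk_off n (Suc q) + p) (M0 q n p A) (blk_vec q n p X Y) r
     = - (\<Sum>i\<in>{1..q}. mat_vec p (n i) (A i) (X i) (r - blk_off n (Suc q)))"
proof -
  have "M0 q n p A r (blk_off n (Suc q) + t) = 0" for t
    using assms unfolding M0_def Let_def by auto
  moreover have "M0 q n p A r (blk_off n j + t) = - A j (r - blk_off n (Suc q)) t"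
    if "j \<in> {1..q}" "t < n j" for j t
    using assms blk_off_add_less[of j q t n, OF that] blk_of_blk_off_add[of j q t n, OF that] unfolding M0_def Let_def by auto
  moreover have "r - blk_off n (Suc q) < p" using assms by linarith
  ultimately show ?thesis
    using assms unfolding mat_vec_def sum_lessThan_blk_vec_dim
    by (simp add: blk_vec_block sum_negf)
qed

lemma M0_mult_blk_vec:
  "mat_vec (blk_off n (Suc q) + p) (blk_off n (Suc q) + p) (M0 q n p A) (blk_vec q n p X Y)
   = blk_vec q n p (\<lambda>i. mat_vec (n i) p (transp (A i)) Y) (\<lambda>t. - (\<Sum>i\<in>{1..q}. mat_vec p (n i) (A i) (X i) t))"
proof
  fix r
  consider "r < blk_off n (Suc q)" | "blk_off n (Suc q) \<le> r" "r < blk_off n (Suc q) + p"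
    | "blk_off n (Suc q) + p \<le> r" by linarith
  then show "mat_vec (blk_off n (Suc q) + p) (blk_off n (Suc q) + p) (M0 q n p A) (blk_vec q n p X Y) r
    = blk_vec q n p (\<lambda>i. mat_vec (n i) p (transp (A i)) Y) (\<lambda>t. - (\<Sum>i\<in>{1..q}. mat_vec p (n i) (A i) (X i) t)) r"
  proof cases
    case 1
    then show ?thesis by (simp add: M0_mult_blk_vec_block blk_vec_def)
  next
    case 2
    then show ?thesis by (simp add: M0_mult_blk_vec_last blk_vec_def)
  next
    case 3
    then show ?thesis by (simp add: mat_vec_def blk_vec_def)
  qed
qed

end

section \<open>Lyapunov analysis of the reflected iteration\<close>

lemma bounded_coords_imp_convergent_subseq:
  fixes X :: "nat \<Rightarrow> nat \<Rightarrow> real"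
  assumes "\<And>r. r < D \<Longrightarrow> bounded (range (\<lambda>j. X j r))"
  shows "\<exists>\<sigma>. strict_mono \<sigma> \<and> (\<forall>r<D. convergent (\<lambda>j. X (\<sigma> j) r))"
  using assms
proof (induction D)
  case 0
  show ?case by (rule exI[of _ id]) (simp add: strict_mono_def)
next
  case (Suc D)
  then obtain \<sigma> where \<sigma>: "strict_mono \<sigma>" "\<forall>r<D. convergent (\<lambda>j. X (\<sigma> j) r)" by auto
  have "bounded (range (\<lambda>j. X (\<sigma> j) D))"
    using Suc.prems[of D] by (rule bounded_subset) auto
  then obtain l \<tau> where \<tau>: "strict_mono \<tau>" "((\<lambda>j. X (\<sigma> j) D) \<circ> \<tau>) \<longlonglongrightarrow> l"
    using bounded_imp_convergent_subsequence by blast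
  have "convergent (\<lambda>j. X ((\<sigma> \<circ> \<tau>) j) r)" if "r < Suc D" for r
  proof (cases "r = D")
    case True
    then show ?thesis using \<tau>(2) unfolding convergent_def by (auto simp: o_def)
  next
    case False
    then have "r < D" using that by simp
    then obtain l' where "(\<lambda>j. X (\<sigma> j) r) \<longlonglongrightarrow> l'"
      using \<sigma>(2) unfolding convergent_def by auto
    from LIMSEQ_subseq_LIMSEQ[OF this \<tau>(1)] show ?thesis unfolding convergent_def by (auto simp: o_def)
  qed
  then show ?case using strict_mono_o[OF \<sigma>(1) \<tau>(1)] by blast
qed

text \<open>The monotonicity assumption below is what the forward-reflected-backward step
  z(k+1) = (I + \<eta> F)\<inverse> (z(k) - \<eta> (2 M z(k) - M z(k-1)))
  yields for a monotone operator F, a skew matrix M and a zero Zs of F + M.\<close>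

locale reflected_iteration =
  fixes D :: nat and M :: "nat \<Rightarrow> nat \<Rightarrow> real" and L \<eta> :: real
    and Z :: "int \<Rightarrow> nat \<Rightarrow> real" and Zs :: "nat \<Rightarrow> real"
  assumes skew: "\<And>r s. M s r = - M r s"
    and bound: "\<And>v. vnorm D (mat_vec D D M v) \<le> L * vnorm D v"
    and L_pos: "L > 0" and eta_pos: "\<eta> > 0" and eta_small: "2 * \<eta> * L < 1"
    and monotone: "\<And>k. k \<ge> 0 \<Longrightarrow>
      vinner D (\<lambda>j. Z k j - Z (k+1) j - \<eta> * (2 * mat_vec D D M (Z k) j
                   - mat_vec D D M (Z (k-1)) j - mat_vec D D M Zs j))
               (\<lambda>j. Z (k+1) j - Zs j) \<ge> 0"
begin

abbreviation Mv where "Mv v \<equiv> mat_vec D D M v"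

definition err where "err k = (\<lambda>j. Z k j - Zs j)"
definition incr where "incr k = (\<lambda>j. Z k j - Z (k-1) j)"
definition err_sq where "err_sq k = vinner D (err k) (err k)"
definition incr_sq where "incr_sq k = vinner D (incr k) (incr k)"
definition coupling where "coupling k = vinner D (Mv (incr k)) (err k)"
definition lyap where "lyap k = err_sq k - 2 * \<eta> * coupling k + \<eta> * L * incr_sq k"

lemma err_sq_nonneg: "err_sq k \<ge> 0"
  unfolding err_sq_def by (rule vinner_self_nonneg)

lemma incr_sq_nonneg: "incr_sq k \<ge> 0"
  unfolding incr_sq_def by (rule vinner_self_nonneg)

lemma abs_vinner_Mv_le: "\<bar>vinner D (Mv a) b\<bar> \<le> L * vnorm D a * vnorm D b"
  using abs_vinner_le_vnorm_mult[of D "Mv a" b] bound[of a] vnorm_nonneg[of D b]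
  by (meson mult_right_mono order_trans)

lemma abs_vinner_Mv_le_sq: "\<bar>vinner D (Mv a) b\<bar> \<le> L * vinner D a a / 2 + L * vinner D b b / 2"
proof -
  have "\<bar>vinner D (Mv a) b\<bar> \<le> L * (vnorm D a * vnorm D b)"
    using abs_vinner_Mv_le[of a b] by (simp add: mult.assoc)
  also have "\<dots> \<le> L * (((vnorm D a)\<^sup>2 + (vnorm D b)\<^sup>2) / 2)"
    using sum_squares_bound[of "vnorm D a" "vnorm D b"] L_pos by (intro mult_left_mono) auto
  finally show ?thesis by (simp add: vnorm_power2 algebra_simps)
qed

lemma monotone_err:
  assumes "k \<ge> 0"
  shows "0 \<le> vinner D (err k) (err (k+1)) - err_sq (k+1) + \<eta> * coupling (k+1)
              - \<eta> * vinner D (Mv (incr k)) (err (k+1))"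
proof -
  have "(\<lambda>j. Z k j - Z (k+1) j - \<eta> * (2 * Mv (Z k) j - Mv (Z (k-1)) j - Mv Zs j))
      = (\<lambda>j. err k j - err (k+1) j - \<eta> * (Mv (err (k+1)) j - Mv (incr (k+1)) j + Mv (incr k) j))"
    unfolding err_def incr_def mat_vec_diff by (auto simp: fun_eq_iff algebra_simps)
  then have "0 \<le> vinner D (\<lambda>j. err k j - err (k+1) j
                 - \<eta> * (Mv (err (k+1)) j - Mv (incr (k+1)) j + Mv (incr k) j)) (err (k+1))"
    using monotone[OF assms] by (simp add: err_def)
  moreover have "vinner D (Mv (err (k+1))) (err (k+1)) = 0"
    by (rule vinner_mat_vec_self_eq_0_if_skew[OF skew])
  ultimately show ?thesis
    unfolding err_sq_def coupling_def by (simp only: vinner_linear) (simp add: algebra_simps)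
qed

lemma lyap_decrease:
  assumes "k \<ge> 0"
  shows "lyap (k+1) \<le> lyap k - (1 - 2 * \<eta> * L) * incr_sq (k+1)"
proof -
  have e: "err (k+1) = (\<lambda>j. err k j + incr (k+1) j)" unfolding err_def incr_def by auto
  define X where "X = vinner D (err k) (incr (k+1))"
  define Q where "Q = vinner D (Mv (incr k)) (incr (k+1))"
  have "vinner D (err k) (err (k+1)) = err_sq k + X"
    unfolding X_def err_sq_def by (subst e) (simp only: vinner_linear)
  moreover have "err_sq (k+1) = err_sq k + 2 * X + incr_sq (k+1)"
    unfolding err_sq_def X_def incr_sq_def e
    by (simp only: vinner_linear) (simp add: vinner_commute[of D "incr (k+1)" "err k"])
  moreover have "vinner D (Mv (incr k)) (err (k+1)) = coupling k + Q"
    unfolding coupling_def Q_def by (subst e) (simp only: vinner_linear)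
  moreover have "- (\<eta> * Q) \<le> \<eta> * (L * incr_sq k / 2 + L * incr_sq (k+1) / 2)"
  proof -
    have "- Q \<le> L * incr_sq k / 2 + L * incr_sq (k+1) / 2"
      using abs_vinner_Mv_le_sq[of "incr k" "incr (k+1)"] unfolding Q_def incr_sq_def by linarith
    from mult_left_mono[OF this, of \<eta>] show ?thesis using eta_pos by simp
  qed
  ultimately show ?thesis
    using monotone_err[OF assms] unfolding lyap_def by (simp add: algebra_simps)
qed

lemma lyap_lower_bound: "(1 - \<eta> * L) * err_sq k \<le> lyap k"
proof -
  have "coupling k \<le> L * incr_sq k / 2 + L * err_sq k / 2"
    using abs_vinner_Mv_le_sq[of "incr k" "err k"]
    unfolding coupling_def incr_sq_def err_sq_def by linarith
  from mult_left_mono[OF this, of \<eta>]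
  have "\<eta> * coupling k \<le> \<eta> * (L * incr_sq k / 2 + L * err_sq k / 2)" using eta_pos by simp
  then show ?thesis unfolding lyap_def by (simp add: algebra_simps)
qed

lemma one_minus_eta_L_pos: "0 < 1 - \<eta> * L"
  using eta_small eta_pos L_pos by simp

lemma lyap_nonneg: "lyap k \<ge> 0"
  using lyap_lower_bound[of k] one_minus_eta_L_pos err_sq_nonneg[of k]
  by (meson mult_nonneg_nonneg less_le order_trans)

lemma lyap_decrease_nat:
  "lyap (int (Suc j)) \<le> lyap (int j) - (1 - 2 * \<eta> * L) * incr_sq (int (Suc j))"
  using lyap_decrease[of "int j"] by (simp add: add.commute)

lemma lyap_decseq: "decseq (\<lambda>j. lyap (int j))"
proof (rule decseq_SucI)
  fix j
  have "0 \<le> (1 - 2 * \<eta> * L) * incr_sq (int (Suc j))"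
    using eta_small incr_sq_nonneg by simp
  then show "lyap (int (Suc j)) \<le> lyap (int j)" using lyap_decrease_nat[of j] by linarith
qed

lemma incr_sq_tendsto_0: "(\<lambda>j. incr_sq (int j)) \<longlonglongrightarrow> 0"
proof -
  obtain l where l: "(\<lambda>j. lyap (int j)) \<longlonglongrightarrow> l"
    using decseq_convergent[OF lyap_decseq, of 0] lyap_nonneg by blast
  have pos: "0 < 1 - 2 * \<eta> * L" using eta_small by simp
  have upper: "incr_sq (int (Suc j)) \<le> (lyap (int j) - lyap (int (Suc j))) / (1 - 2 * \<eta> * L)" for j
    using lyap_decrease_nat[of j] pos by (simp add: le_divide_eq mult.commute)
  have lim: "(\<lambda>j. (lyap (int j) - lyap (int (Suc j))) / (1 - 2 * \<eta> * L)) \<longlonglongrightarrow> 0"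
    using tendsto_divide[OF tendsto_diff[OF l LIMSEQ_Suc[OF l]] tendsto_const[of "1 - 2 * \<eta> * L"]] pos by simp
  have "(\<lambda>j. incr_sq (int (Suc j))) \<longlonglongrightarrow> 0"
    by (rule real_tendsto_sandwich[OF always_eventually always_eventually tendsto_const lim])
       (use incr_sq_nonneg upper in auto)
  then show ?thesis by (rule LIMSEQ_imp_Suc)
qed

lemma err_sq_le: "err_sq k \<le> lyap 0 / (1 - \<eta> * L)" if "k \<ge> 0"
proof -
  have "(1 - \<eta> * L) * err_sq k \<le> lyap 0"
    using lyap_lower_bound[of k] decseqD[OF lyap_decseq, of 0 "nat k"] that by simp
  then show ?thesis using one_minus_eta_L_pos by (simp add: le_divide_eq mult.commute)
qed

lemma coupling_tendsto_0: "(\<lambda>j. coupling (int j)) \<longlonglongrightarrow> 0"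
proof (rule Lim_null_comparison)
  define B where "B = lyap 0 / (1 - \<eta> * L)"
  show "\<forall>\<^sub>F j in sequentially. norm (coupling (int j)) \<le> L * sqrt (incr_sq (int j)) * sqrt B"
  proof (rule always_eventually, rule allI)
    fix j
    have "norm (coupling (int j)) \<le> L * vnorm D (incr (int j)) * vnorm D (err (int j))"
      unfolding coupling_def real_norm_def by (rule abs_vinner_Mv_le)
    also have "\<dots> \<le> L * sqrt (incr_sq (int j)) * sqrt B"
      unfolding vnorm_eq_sqrt_vinner incr_sq_def[symmetric] err_sq_def[symmetric] B_def
      using err_sq_le[of "int j"] L_pos incr_sq_nonneg[of "int j"]
      by (intro mult_left_mono) auto
    finally show "norm (coupling (int j)) \<le> L * sqrt (incr_sq (int j)) * sqrt B" .
  qed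
  have "(\<lambda>j. L * sqrt (incr_sq (int j)) * sqrt B) \<longlonglongrightarrow> L * sqrt 0 * sqrt B"
    by (intro tendsto_intros incr_sq_tendsto_0)
  then show "(\<lambda>j. L * sqrt (incr_sq (int j)) * sqrt B) \<longlonglongrightarrow> 0" by simp
qed

lemma err_sq_convergent: "convergent (\<lambda>j. err_sq (int j))"
proof -
  obtain l where l: "(\<lambda>j. lyap (int j)) \<longlonglongrightarrow> l"
    using decseq_convergent[OF lyap_decseq, of 0] lyap_nonneg by blast
  have "(\<lambda>j. lyap (int j) + 2 * \<eta> * coupling (int j) - \<eta> * L * incr_sq (int j))
          \<longlonglongrightarrow> l + 2 * \<eta> * 0 - \<eta> * L * 0"
    by (intro tendsto_intros l coupling_tendsto_0 incr_sq_tendsto_0)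
  then show ?thesis unfolding convergent_def lyap_def by auto
qed

lemma bounded_coord:
  assumes "r < D"
  shows "bounded (range (\<lambda>j. Z (int j) r))"
proof -
  have "\<bar>Z (int j) r\<bar> \<le> sqrt (lyap 0 / (1 - \<eta> * L)) + \<bar>Zs r\<bar>" for j
  proof -
    have "\<bar>Z (int j) r - Zs r\<bar> \<le> sqrt (err_sq (int j))"
      using abs_coord_diff_le[OF assms] unfolding err_sq_def err_def .
    also have "\<dots> \<le> sqrt (lyap 0 / (1 - \<eta> * L))" using err_sq_le[of "int j"] by simp
    finally show ?thesis by linarith
  qed
  then show ?thesis unfolding bounded_real by blast
qed

lemma incr_coord_tendsto_0:
  assumes "r < D"
  shows "(\<lambda>j. Z (int j) r - Z (int j - 1) r) \<longlonglongrightarrow> 0"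
proof (rule Lim_null_comparison[OF always_eventually])
  show "\<forall>j. norm (Z (int j) r - Z (int j - 1) r) \<le> sqrt (incr_sq (int j))"
    using abs_coord_diff_le[OF assms] unfolding incr_sq_def incr_def by simp
  show "(\<lambda>j. sqrt (incr_sq (int j))) \<longlonglongrightarrow> 0"
    using tendsto_real_sqrt[OF incr_sq_tendsto_0] by simp
qed

lemma cluster_point_with_neighbours:
  obtains \<sigma> Zb where "strict_mono \<sigma>"
    and "\<And>r s. r < D \<Longrightarrow> s \<in> {-1, 0, 1} \<Longrightarrow> (\<lambda>j. Z (int (\<sigma> j) + s) r) \<longlonglongrightarrow> Zb r"
proof -
  obtain \<sigma> where \<sigma>: "strict_mono \<sigma>" and cv: "\<forall>r<D. convergent (\<lambda>j. Z (int (\<sigma> j)) r)"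
    using bounded_coords_imp_convergent_subseq[of D "\<lambda>j r. Z (int j) r"] bounded_coord by blast
  define Zb where "Zb r = lim (\<lambda>j. Z (int (\<sigma> j)) r)" for r
  have "(\<lambda>j. Z (int (\<sigma> j) + s) r) \<longlonglongrightarrow> Zb r" if r: "r < D" and s: "s \<in> {-1, 0, 1}" for r s
  proof -
    have Z0: "(\<lambda>j. Z (int (\<sigma> j)) r) \<longlonglongrightarrow> Zb r"
      using cv r unfolding Zb_def by (simp add: convergent_LIMSEQ_iff)
    have incr: "(\<lambda>j. Z (int j) r - Z (int j - 1) r) \<longlonglongrightarrow> 0"
      by (rule incr_coord_tendsto_0[OF r])
    have "(\<lambda>j. Z (int (\<sigma> j)) r + (Z (int (Suc (\<sigma> j))) r - Z (int (Suc (\<sigma> j)) - 1) r)) \<longlonglongrightarrow> Zb r + 0"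
      using LIMSEQ_subseq_LIMSEQ[OF LIMSEQ_Suc[OF incr] \<sigma>] by (intro tendsto_add Z0) (simp add: o_def)
    moreover have "(\<lambda>j. Z (int (\<sigma> j)) r - (Z (int (\<sigma> j)) r - Z (int (\<sigma> j) - 1) r)) \<longlonglongrightarrow> Zb r - 0"
      using LIMSEQ_subseq_LIMSEQ[OF incr \<sigma>] by (intro tendsto_diff Z0) (simp add: o_def)
    ultimately show ?thesis using s Z0 by (auto simp: add.commute)
  qed
  then show ?thesis using that \<sigma> by blast
qed

text \<open>Opial's argument: the distance to the centre Zs converges, and along
  a subsequence it tends to zero.\<close>

lemma tendsto_centre_if_subseq_tendsto:
  assumes \<sigma>: "strict_mono \<sigma>" and sub: "\<And>r. r < D \<Longrightarrow> (\<lambda>j. Z (int (\<sigma> j)) r) \<longlonglongrightarrow> Zs r"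
    and r: "r < D"
  shows "(\<lambda>k. Z (int k) r) \<longlonglongrightarrow> Zs r"
proof -
  obtain l where l: "(\<lambda>j. err_sq (int j)) \<longlonglongrightarrow> l" using err_sq_convergent convergent_def by blast
  have "(\<lambda>j. err_sq (int (\<sigma> j))) \<longlonglongrightarrow> (\<Sum>r<D. (Zs r - Zs r) * (Zs r - Zs r))"
    unfolding err_sq_def err_def vinner_def by (intro tendsto_intros sub) auto
  moreover have "(\<lambda>j. err_sq (int (\<sigma> j))) \<longlonglongrightarrow> l" using LIMSEQ_subseq_LIMSEQ[OF l \<sigma>] by (simp add: o_def)
  ultimately have "l = 0" using LIMSEQ_unique by fastforce
  have "(\<lambda>k. Z (int k) r - Zs r) \<longlonglongrightarrow> 0"
  proof (rule Lim_null_comparison[OF always_eventually])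
    show "\<forall>k. norm (Z (int k) r - Zs r) \<le> sqrt (err_sq (int k))"
      using abs_coord_diff_le[OF r] unfolding err_sq_def err_def by simp
    show "(\<lambda>k. sqrt (err_sq (int k))) \<longlonglongrightarrow> 0"
      using tendsto_real_sqrt[OF l] \<open>l = 0\<close> by simp
  qed
  from tendsto_add[OF this tendsto_const[of "Zs r"]] show ?thesis by simp
qed

end

section \<open>Proximal steps\<close>

lemma le_if_le_add_small_multiples:
  fixes X Y C :: real
  assumes "\<And>t. 0 < t \<Longrightarrow> t < 1 \<Longrightarrow> X \<le> Y + t * C"
  shows "X \<le> Y"
proof (rule ccontr)
  assume "\<not> X \<le> Y"
  then have XY: "X > Y" by simp
  show False
  proof (cases "C \<le> 0")
    case True
    then show ?thesis using assms[of "1/2"] XY by simp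
  next
    case False
    define t where "t = min (1/2) ((X - Y) / (2 * C))"
    have "0 < t" "t < 1" unfolding t_def using XY False by auto
    moreover have "t * C \<le> (X - Y) / 2"
      using mult_right_mono[of t "(X - Y) / (2 * C)" C] False unfolding t_def by simp
    ultimately show ?thesis using assms[of t] XY by simp
  qed
qed

lemma sum_ereal_real:
  assumes "\<And>j. j \<in> T \<Longrightarrow> \<bar>h j\<bar> \<noteq> \<infinity>"
  shows "sum h T = ereal (\<Sum>j\<in>T. real_of_ereal (h j))"
proof -
  have "sum h T = (\<Sum>j\<in>T. ereal (real_of_ereal (h j)))"
    using assms by (intro sum.cong refl) (auto simp: ereal_real)
  then show ?thesis by simp
qed

lemma sum_ereal_min_imp_blockwise_min:
  fixes g :: "'i \<Rightarrow> 'a \<Rightarrow> ereal"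
  assumes I: "finite I" "i \<in> I" and u: "P i u"
    and xs: "\<forall>j\<in>I. P j (xs j)" and fin: "\<forall>j\<in>I. \<bar>g j (xs j)\<bar> \<noteq> \<infinity>"
    and min: "\<And>xx. \<forall>j\<in>I. P j (xx j) \<Longrightarrow> (\<Sum>j\<in>I. g j (xs j)) \<le> (\<Sum>j\<in>I. g j (xx j))"
  shows "g i (xs i) \<le> g i u"
proof -
  define R where "R = (\<Sum>j\<in>I - {i}. g j (xs j))"
  have R: "\<bar>R\<bar> \<noteq> \<infinity>" unfolding R_def using fin by (subst sum_ereal_real) auto
  have "g i (xs i) + R = (\<Sum>j\<in>I. g j (xs j))" unfolding R_def using I by (simp add: sum.remove)
  also have "\<dots> \<le> (\<Sum>j\<in>I. g j ((xs(i := u)) j))" using min xs u by simp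
  also have "\<dots> = g i u + R" unfolding R_def using I by (simp add: sum.remove)
  finally show ?thesis using R ereal_add_le_add_iff2[of "g i (xs i)" R "g i u"] by auto
qed

lemma prox_argmin_finite:
  assumes pr: "proper_fn m F" and eta: "\<eta> > 0"
    and am: "is_arg_min (\<lambda>u. ereal \<eta> * F u + ereal (h u)) (inR m) x'"
  shows "inR m x' \<and> \<bar>F x'\<bar> \<noteq> \<infinity>"
proof -
  have x': "inR m x'" using am unfolding is_arg_min_def by simp
  obtain w where w: "inR m w" "F w \<noteq> \<infinity>" using pr unfolding proper_fn_def by blast
  then obtain b where b: "F w = ereal b" using pr unfolding proper_fn_def by (cases "F w") auto
  have "ereal \<eta> * F x' + ereal (h x') \<le> ereal \<eta> * F w + ereal (h w)"
    using am w unfolding is_arg_min_def by (meson not_le)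
  then have "F x' \<noteq> \<infinity>" using eta b by auto
  moreover have "F x' \<noteq> -\<infinity>" using pr x' unfolding proper_fn_def by blast
  ultimately show ?thesis using x' by (cases "F x'") auto
qed

lemma prox_le_along_segment:
  assumes cv: "convex_fn m F" and pr: "proper_fn m F" and eta: "\<eta> > 0"
    and am: "is_arg_min (\<lambda>u. ereal \<eta> * F u + ereal ((1/2) * (vnorm m (\<lambda>j. u j - w j))\<^sup>2)) (inR m) x'"
    and u: "inR m u" and Fa: "F x' = ereal a" and Fb: "F u = ereal b" and t: "0 < t" "t < 1"
  shows "\<eta> * a \<le> \<eta> * b + vinner m (\<lambda>j. x' j - w j) (\<lambda>j. u j - x' j)
                  + t * (vinner m (\<lambda>j. u j - x' j) (\<lambda>j. u j - x' j) / 2)"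
proof -
  define S1 where "S1 = vinner m (\<lambda>j. x' j - w j) (\<lambda>j. u j - x' j)"
  define S2 where "S2 = vinner m (\<lambda>j. u j - x' j) (\<lambda>j. u j - x' j)"
  define Q0 where "Q0 = vinner m (\<lambda>j. x' j - w j) (\<lambda>j. x' j - w j)"
  define ut where "ut = (\<lambda>j. t * u j + (1 - t) * x' j)"
  have x': "inR m x'" using am unfolding is_arg_min_def by simp
  have ut: "inR m ut" using u x' unfolding inR_def ut_def by simp
  have "F ut \<le> ereal t * F u + ereal (1 - t) * F x'"
    using cv u x' t unfolding convex_fn_def ut_def by blast
  then have Fut: "F ut \<le> ereal (t * b + (1 - t) * a)" unfolding Fa Fb by simp
  have "F ut \<noteq> -\<infinity>" using pr ut unfolding proper_fn_def by blast
  then obtain d where d: "F ut = ereal d" using Fut by (cases "F ut") auto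
  have "ereal \<eta> * F x' + ereal ((1/2) * (vnorm m (\<lambda>j. x' j - w j))\<^sup>2)
      \<le> ereal \<eta> * F ut + ereal ((1/2) * (vnorm m (\<lambda>j. ut j - w j))\<^sup>2)"
    using am ut unfolding is_arg_min_def by (meson not_le)
  then have ineq: "\<eta> * a + Q0 / 2 \<le> \<eta> * d + vinner m (\<lambda>j. ut j - w j) (\<lambda>j. ut j - w j) / 2"
    unfolding Fa d vnorm_power2 Q0_def by simp
  have "(\<lambda>j. ut j - w j) = (\<lambda>j. (x' j - w j) + t * (u j - x' j))"
    unfolding ut_def by (auto simp: algebra_simps)
  then have "vinner m (\<lambda>j. ut j - w j) (\<lambda>j. ut j - w j) = Q0 + 2 * t * S1 + t * t * S2"
    unfolding Q0_def S1_def S2_def by (simp only: vinner_linear) (simp add: vinner_commute algebra_simps)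
  moreover have "\<eta> * d \<le> \<eta> * (t * b + (1 - t) * a)" using Fut d eta by simp
  ultimately have "t * (\<eta> * a) \<le> t * (\<eta> * b + S1 + t * (S2 / 2))"
    using ineq by (simp add: field_simps)
  then show ?thesis using t unfolding S1_def S2_def by simp
qed

text \<open>The subgradient inequality (w - x')/\<eta> \<in> \<partial>F(x'), obtained by letting t tend to 0
  in the previous lemma.\<close>

lemma prox_variational_ineq:
  assumes cv: "convex_fn m F" and pr: "proper_fn m F" and eta: "\<eta> > 0"
    and am: "is_arg_min (\<lambda>u. ereal \<eta> * F u + ereal ((1/2) * (vnorm m (\<lambda>j. u j - w j))\<^sup>2)) (inR m) x'"
    and u: "inR m u" "F u \<noteq> \<infinity>"
  shows "\<eta> * real_of_ereal (F x') + vinner m (\<lambda>j. w j - x' j) (\<lambda>j. u j - x' j) \<le> \<eta> * real_of_ereal (F u)"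
proof -
  have "\<bar>F x'\<bar> \<noteq> \<infinity>" using prox_argmin_finite[OF pr eta am] by auto
  then obtain a where Fa: "F x' = ereal a" by (cases "F x'") auto
  have "F u \<noteq> -\<infinity>" using pr u unfolding proper_fn_def by blast
  then obtain b where Fb: "F u = ereal b" using u by (cases "F u") auto
  have "\<eta> * a \<le> \<eta> * b + vinner m (\<lambda>j. x' j - w j) (\<lambda>j. u j - x' j)"
    by (rule le_if_le_add_small_multiples) (rule prox_le_along_segment[OF cv pr eta am u(1) Fa Fb])
  moreover have "vinner m (\<lambda>j. w j - x' j) (\<lambda>j. u j - x' j) = - vinner m (\<lambda>j. x' j - w j) (\<lambda>j. u j - x' j)"
    by (simp add: vinner_def sum_negf[symmetric] algebra_simps)
  ultimately show ?thesis unfolding Fa Fb by simp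
qed

lemma prox_monotone_ineq:
  assumes cv: "convex_fn m F" and pr: "proper_fn m F" and eta: "\<eta> > 0"
    and am: "is_arg_min (\<lambda>u. ereal \<eta> * F u + ereal ((1/2) * (vnorm m (\<lambda>j. u j - w j))\<^sup>2)) (inR m) x'"
    and u0: "inR m u0" "F u0 \<noteq> \<infinity>"
    and opt: "\<And>u. inR m u \<Longrightarrow> F u0 + ereal (vinner m g u0) \<le> F u + ereal (vinner m g u)"
  shows "vinner m (\<lambda>t. w t - x' t + \<eta> * g t) (\<lambda>t. x' t - u0 t) \<ge> 0"
proof -
  have x': "inR m x'" "\<bar>F x'\<bar> \<noteq> \<infinity>" using prox_argmin_finite[OF pr eta am] by auto
  have "F u0 \<noteq> -\<infinity>" using pr u0 unfolding proper_fn_def by blast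
  then obtain b where Fb: "F u0 = ereal b" using u0 by (cases "F u0") auto
  obtain a where Fa: "F x' = ereal a" using x' by (cases "F x'") auto
  have "b + vinner m g u0 \<le> a + vinner m g x'" using opt[OF x'(1)] unfolding Fa Fb by simp
  then have "\<eta> * b \<le> \<eta> * (a + vinner m g x' - vinner m g u0)" using eta by simp
  moreover have "\<eta> * a + vinner m (\<lambda>j. w j - x' j) (\<lambda>j. u0 j - x' j) \<le> \<eta> * b"
    using prox_variational_ineq[OF cv pr eta am u0] unfolding Fa Fb by simp
  moreover have "vinner m (\<lambda>t. w t - x' t + \<eta> * g t) (\<lambda>t. x' t - u0 t)
     = - vinner m (\<lambda>j. w j - x' j) (\<lambda>j. u0 j - x' j) + \<eta> * (vinner m g x' - vinner m g u0)"
    by (simp add: vinner_def sum_negf[symmetric] sum_subtractf[symmetric] sum.distrib[symmetric]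
        sum_distrib_left algebra_simps)
  ultimately show ?thesis by (simp add: algebra_simps)
qed

section \<open>The linearly constrained problem\<close>

locale frb_problem =
  fixes q p :: nat
    and n :: "nat \<Rightarrow> nat"
    and f :: "nat \<Rightarrow> (nat \<Rightarrow> real) \<Rightarrow> ereal"
    and A :: "nat \<Rightarrow> nat \<Rightarrow> nat \<Rightarrow> real"
    and c :: "nat \<Rightarrow> real"
    and Lt \<eta> :: real
    and x :: "nat \<Rightarrow> int \<Rightarrow> nat \<Rightarrow> real"
    and y :: "int \<Rightarrow> nat \<Rightarrow> real"
  assumes f_proper: "\<forall>i\<in>{1..q}. proper_fn (n i) (f i)"
    and f_closed: "\<forall>i\<in>{1..q}. closed_fn (n i) (f i)"
    and f_convex: "\<forall>i\<in>{1..q}. convex_fn (n i) (f i)"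
    and Lt_pos: "Lt > 0"
    and M0_bound: "spec_norm (blk_off n (q+1) + p) (blk_off n (q+1) + p) (M0 q n p A) \<le> Lt"
    and eta: "0 < \<eta>" "\<eta> < 1 / (2 * Lt)"
    and x_step: "\<forall>k\<ge>0. \<forall>i\<in>{1..q}.
        (let xhat = (\<lambda>j. x i k j - 2 * \<eta> * mat_vec (n i) p (transp (A i)) (y k) j
                          + \<eta> * mat_vec (n i) p (transp (A i)) (y (k - 1)) j)
         in is_arg_min (\<lambda>u. ereal \<eta> * f i u + ereal ((1/2) * (vnorm (n i) (\<lambda>j. u j - xhat j))\<^sup>2))
                       (inR (n i)) (x i (k + 1)))"
    and y_step: "\<forall>k\<ge>0. y (k + 1) = (\<lambda>r. y k r
        + 2 * \<eta> * (\<Sum>i\<in>{1..q}. mat_vec p (n i) (A i) (x i k) r)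
        - \<eta> * (\<Sum>i\<in>{1..q}. mat_vec p (n i) (A i) (x i (k - 1)) r)
        - \<eta> * c r)"
begin

abbreviation AT where "AT i v \<equiv> mat_vec (n i) p (transp (A i)) v"

definition Ax where "Ax X r = (\<Sum>i\<in>{1..q}. mat_vec p (n i) (A i) (X i) r)"

definition xhat where "xhat i k = (\<lambda>j. x i k j - 2 * \<eta> * AT i (y k) j + \<eta> * AT i (y (k - 1)) j)"

definition lagrangian where
  "lagrangian X Y = (\<Sum>i\<in>{1..q}. f i (X i)) + ereal (vinner p Y (\<lambda>r. Ax X r - c r))"

definition kkt_point where
  "kkt_point X Y \<longleftrightarrow> inR p Y \<and> (\<forall>r<p. Ax X r = c r) \<and>
     (\<forall>i\<in>{1..q}. inR (n i) (X i) \<and> f i (X i) \<noteq> \<infinity> \<and>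
        (\<forall>u. inR (n i) u \<longrightarrow> f i (X i) + ereal (vinner (n i) (AT i Y) (X i))
                              \<le> f i u + ereal (vinner (n i) (AT i Y) u)))"

abbreviation zdim where "zdim \<equiv> blk_off n (Suc q) + p"

abbreviation Z where "Z k \<equiv> blk_vec q n p (\<lambda>i. x i k) (y k)"

lemma prox_step: "k \<ge> 0 \<Longrightarrow> i \<in> {1..q} \<Longrightarrow>
  is_arg_min (\<lambda>u. ereal \<eta> * f i u + ereal ((1/2) * (vnorm (n i) (\<lambda>j. u j - xhat i k j))\<^sup>2))
    (inR (n i)) (x i (k + 1))"
  using x_step unfolding xhat_def Let_def by auto

lemma dual_step: "k \<ge> 0 \<Longrightarrow>
  y (k + 1) r = y k r + 2 * \<eta> * Ax (\<lambda>i. x i k) r - \<eta> * Ax (\<lambda>i. x i (k - 1)) r - \<eta> * c r"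
  using y_step unfolding Ax_def by auto

lemma f_neq_minf: "i \<in> {1..q} \<Longrightarrow> inR (n i) u \<Longrightarrow> f i u \<noteq> -\<infinity>"
  using f_proper unfolding proper_fn_def by blast

lemma lagrangian_separable:
  "lagrangian X Y = (\<Sum>i\<in>{1..q}. f i (X i) + ereal (vinner (n i) (AT i Y) (X i))) + ereal (- vinner p Y c)"
proof -
  have "vinner p Y (\<lambda>r. Ax X r - c r) = (\<Sum>i\<in>{1..q}. vinner (n i) (AT i Y) (X i)) + - vinner p Y c"
    unfolding vinner_diff_right Ax_def sum_vinner_mat_vec_transp by simp
  then show ?thesis
    unfolding lagrangian_def sum.distrib by (simp add: add.assoc)
qed

lemma lagrangian_feasible: "\<forall>r<p. Ax X r = c r \<Longrightarrow> lagrangian X Y = (\<Sum>i\<in>{1..q}. f i (X i))"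
  unfolding lagrangian_def vinner_def by simp

lemma saddle_value_finite:
  assumes xs: "\<forall>i\<in>{1..q}. inR (n i) (xs i)"
    and min: "\<And>xx. \<forall>i\<in>{1..q}. inR (n i) (xx i) \<Longrightarrow> lagrangian xs ys \<le> lagrangian xx ys"
    and i: "i \<in> {1..q}"
  shows "\<bar>f i (xs i)\<bar> \<noteq> \<infinity>"
proof -
  obtain w where w: "\<And>i. i \<in> {1..q} \<Longrightarrow> inR (n i) (w i) \<and> f i (w i) \<noteq> \<infinity>"
    using f_proper unfolding proper_fn_def by metis
  then have "lagrangian w ys \<noteq> \<infinity>" unfolding lagrangian_def by (simp add: sum_Pinfty)
  then have "lagrangian xs ys \<noteq> \<infinity>" using min[of w] w by auto
  then have "f i (xs i) \<noteq> \<infinity>" using i unfolding lagrangian_def by (auto simp: sum_Pinfty)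
  then show ?thesis using f_neq_minf[OF i] xs i by auto
qed

lemma saddle_feasible:
  assumes fin: "\<forall>i\<in>{1..q}. \<bar>f i (xs i)\<bar> \<noteq> \<infinity>"
    and max: "\<And>yy. inR p yy \<Longrightarrow> lagrangian xs yy \<le> lagrangian xs ys"
    and r: "r < p"
  shows "Ax xs r = c r"
proof -
  define res where "res r = Ax xs r - c r" for r
  define yy where "yy r = (if r < p then ys r + res r else 0)" for r
  obtain F where F: "(\<Sum>i\<in>{1..q}. f i (xs i)) = ereal F"
    using sum_ereal_real[of "{1..q}" "\<lambda>i. f i (xs i)"] fin by auto
  have "inR p yy" unfolding yy_def inR_def by simp
  then have "vinner p yy res \<le> vinner p ys res"
    using max[of yy] unfolding lagrangian_def res_def F by simp
  moreover have "vinner p yy res = vinner p ys res + vinner p res res"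
    unfolding yy_def vinner_def by (simp add: algebra_simps sum.distrib)
  ultimately have "vinner p res res \<le> 0" by simp
  from coord_eq_0_if_vinner_self_le_0[OF this r] show ?thesis unfolding res_def by simp
qed

lemma kkt_point_if_saddle_point:
  assumes xs: "\<forall>i\<in>{1..q}. inR (n i) (xs i)" and ys: "inR p ys"
    and saddle: "\<And>xx yy. \<forall>i\<in>{1..q}. inR (n i) (xx i) \<Longrightarrow> inR p yy \<Longrightarrow>
                   lagrangian xs yy \<le> lagrangian xs ys \<and> lagrangian xs ys \<le> lagrangian xx ys"
  shows "kkt_point xs ys"
proof -
  have min: "lagrangian xs ys \<le> lagrangian xx ys" if "\<forall>i\<in>{1..q}. inR (n i) (xx i)" for xx
    using saddle[OF that ys] by simp
  have max: "lagrangian xs yy \<le> lagrangian xs ys" if "inR p yy" for yy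
    using saddle[OF xs that] by simp
  have fin: "\<forall>i\<in>{1..q}. \<bar>f i (xs i)\<bar> \<noteq> \<infinity>"
  proof
    fix i assume "i \<in> {1..q}"
    from saddle_value_finite[OF xs min this] show "\<bar>f i (xs i)\<bar> \<noteq> \<infinity>" .
  qed
  have "f i (xs i) + ereal (vinner (n i) (AT i ys) (xs i)) \<le> f i u + ereal (vinner (n i) (AT i ys) u)"
    if i: "i \<in> {1..q}" and u: "inR (n i) u" for i u
  proof (rule sum_ereal_min_imp_blockwise_min[where P = "\<lambda>i. inR (n i)"])
    show "\<forall>j\<in>{1..q}. \<bar>f j (xs j) + ereal (vinner (n j) (AT j ys) (xs j))\<bar> \<noteq> \<infinity>"
    proof
      fix j assume "j \<in> {1..q}"
      then show "\<bar>f j (xs j) + ereal (vinner (n j) (AT j ys) (xs j))\<bar> \<noteq> \<infinity>"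
        using fin[rule_format, of j] by (cases "f j (xs j)") auto
    qed
    fix xx assume "\<forall>j\<in>{1..q}. inR (n j) (xx j)"
    from min[OF this] show "(\<Sum>j\<in>{1..q}. f j (xs j) + ereal (vinner (n j) (AT j ys) (xs j)))
             \<le> (\<Sum>j\<in>{1..q}. f j (xx j) + ereal (vinner (n j) (AT j ys) (xx j)))"
      unfolding lagrangian_separable by (simp add: ereal_add_le_add_iff2)
  qed (use i u xs in auto)
  moreover have "\<forall>r<p. Ax xs r = c r"
    using saddle_feasible[OF fin max] by blast
  moreover have "f i (xs i) \<noteq> \<infinity>" if "i \<in> {1..q}" for i
    using fin[rule_format, OF that] by auto
  ultimately show ?thesis
    unfolding kkt_point_def using xs ys by blast
qed

lemma kkt_point_optimal:
  assumes kkt: "kkt_point xs ys"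
    and xx: "\<forall>i\<in>{1..q}. inR (n i) (xx i)" and feas: "\<forall>r<p. Ax xx r = c r"
  shows "(\<Sum>i\<in>{1..q}. f i (xs i)) \<le> (\<Sum>i\<in>{1..q}. f i (xx i))"
proof -
  have "(\<Sum>i\<in>{1..q}. f i (xs i)) = lagrangian xs ys"
    using kkt lagrangian_feasible unfolding kkt_point_def by simp
  also have "\<dots> \<le> lagrangian xx ys"
    unfolding lagrangian_separable using kkt xx unfolding kkt_point_def
    by (intro add_right_mono sum_mono) blast
  also have "\<dots> = (\<Sum>i\<in>{1..q}. f i (xx i))" using feas by (rule lagrangian_feasible)
  finally show ?thesis .
qed

lemma M0_mult_Z:
  "mat_vec zdim zdim (M0 q n p A) (blk_vec q n p X Y) = blk_vec q n p (\<lambda>i. AT i Y) (\<lambda>t. - Ax X t)"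
  unfolding Ax_def by (rule M0_mult_blk_vec)

lemma monotone_at_kkt_point:
  assumes kkt: "kkt_point xs ys" and k: "k \<ge> 0"
  shows "vinner zdim (\<lambda>j. Z k j - Z (k+1) j - \<eta> * (2 * mat_vec zdim zdim (M0 q n p A) (Z k) j
             - mat_vec zdim zdim (M0 q n p A) (Z (k-1)) j
             - mat_vec zdim zdim (M0 q n p A) (blk_vec q n p xs ys) j))
           (\<lambda>j. Z (k+1) j - blk_vec q n p xs ys j) \<ge> 0"
proof -
  define X where "X i t = x i k t - x i (k+1) t - \<eta> * (2 * AT i (y k) t - AT i (y (k-1)) t - AT i ys t)" for i t
  define Y where "Y t = y k t - y (k+1) t
      - \<eta> * (2 * (- Ax (\<lambda>i. x i k) t) - (- Ax (\<lambda>i. x i (k-1)) t) - (- Ax xs t))" for t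
  have "Y t = 0" if "t < p" for t
    using dual_step[OF k, of t] kkt that unfolding Y_def kkt_point_def by (simp add: algebra_simps)
  then have Y0: "vinner p Y (\<lambda>t. y (k+1) t - ys t) = 0"
    unfolding vinner_def by simp
  have X0: "vinner (n i) (X i) (\<lambda>t. x i (k+1) t - xs i t) \<ge> 0" if i: "i \<in> {1..q}" for i
  proof -
    have "convex_fn (n i) (f i)" "proper_fn (n i) (f i)" using f_convex f_proper i by auto
    from prox_monotone_ineq[OF this eta(1) prox_step[OF k i]]
    have "vinner (n i) (\<lambda>t. xhat i k t - x i (k+1) t + \<eta> * AT i ys t) (\<lambda>t. x i (k+1) t - xs i t) \<ge> 0"
      using kkt i unfolding kkt_point_def by blast
    moreover have "(\<lambda>t. xhat i k t - x i (k+1) t + \<eta> * AT i ys t) = X i"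
      unfolding xhat_def X_def by (auto simp: fun_eq_iff algebra_simps)
    ultimately show ?thesis by simp
  qed
  have vec: "(\<lambda>j. Z k j - Z (k+1) j - \<eta> * (2 * mat_vec zdim zdim (M0 q n p A) (Z k) j
             - mat_vec zdim zdim (M0 q n p A) (Z (k-1)) j
             - mat_vec zdim zdim (M0 q n p A) (blk_vec q n p xs ys) j)) = blk_vec q n p X Y"
    unfolding M0_mult_Z blk_vec_reflected_combination X_def Y_def by simp
  show ?thesis
    unfolding vec blk_vec_diff vinner_blk_vec Y0 using X0 by (auto intro!: sum_nonneg)
qed

lemma reflected_iteration_at_kkt_point:
  assumes "kkt_point xs ys"
  shows "reflected_iteration zdim (M0 q n p A) Lt \<eta> Z (blk_vec q n p xs ys)"
proof
  show "M0 q n p A s r = - M0 q n p A r s" for r s by (rule M0_skew)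
  show "vnorm zdim (mat_vec zdim zdim (M0 q n p A) v) \<le> Lt * vnorm zdim v" for v
    by (rule vnorm_mat_vec_le_spec_norm) (use M0_bound in simp)
  have "\<eta> * (2 * Lt) < 1" using eta Lt_pos by (simp add: less_divide_eq)
  then show "2 * \<eta> * Lt < 1" by (simp add: mult_ac)
qed (use Lt_pos eta monotone_at_kkt_point[OF assms] in auto)

context
  fixes \<sigma> :: "nat \<Rightarrow> nat" and xb :: "nat \<Rightarrow> nat \<Rightarrow> real" and yb :: "nat \<Rightarrow> real"
  assumes x_lim: "\<And>s i t. s \<in> {-1, 0, 1} \<Longrightarrow> i \<in> {1..q} \<Longrightarrow> t < n i \<Longrightarrow>
      (\<lambda>j. x i (int (\<sigma> j) + s) t) \<longlonglongrightarrow> xb i t"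
    and y_lim: "\<And>s t. s \<in> {-1, 0, 1} \<Longrightarrow> t < p \<Longrightarrow> (\<lambda>j. y (int (\<sigma> j) + s) t) \<longlonglongrightarrow> yb t"
    and xb: "\<And>i. inR (n i) (xb i)" and yb: "inR p yb"
begin

lemma Ax_shift_tendsto: "s \<in> {-1, 0, 1} \<Longrightarrow> (\<lambda>j. Ax (\<lambda>i. x i (int (\<sigma> j) + s)) r) \<longlonglongrightarrow> Ax xb r"
  unfolding Ax_def mat_vec_def by (cases "r < p") (auto intro!: tendsto_intros x_lim)

lemma AT_shift_tendsto: "s \<in> {-1, 0, 1} \<Longrightarrow> (\<lambda>j. AT i (y (int (\<sigma> j) + s)) t) \<longlonglongrightarrow> AT i yb t"
  unfolding mat_vec_def by (cases "t < n i") (auto intro!: tendsto_intros y_lim)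

lemma cluster_point_feasible:
  assumes r: "r < p"
  shows "Ax xb r = c r"
proof -
  let ?lhs = "\<lambda>j. 2 * \<eta> * Ax (\<lambda>i. x i (int (\<sigma> j) + 0)) r - \<eta> * Ax (\<lambda>i. x i (int (\<sigma> j) + -1)) r - \<eta> * c r"
  have "(\<lambda>j. y (int (\<sigma> j) + 1) r - y (int (\<sigma> j) + 0) r) \<longlonglongrightarrow> yb r - yb r"
    by (intro tendsto_intros y_lim r) auto
  moreover have "y (int (\<sigma> j) + 1) r - y (int (\<sigma> j) + 0) r = ?lhs j" for j
    using dual_step[of "int (\<sigma> j)" r] by simp
  ultimately have "?lhs \<longlonglongrightarrow> 0" by simp
  moreover have "?lhs \<longlonglongrightarrow> 2 * \<eta> * Ax xb r - \<eta> * Ax xb r - \<eta> * c r"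
    by (intro tendsto_intros Ax_shift_tendsto) auto
  ultimately have "\<eta> * Ax xb r = \<eta> * c r" using LIMSEQ_unique by fastforce
  then show ?thesis using eta(1) by simp
qed

text \<open>Pass to the limit in the prox inequality of the step producing x(\<sigma> j + 1),
  using lower semicontinuity of f i on the left.\<close>

lemma cluster_point_blockwise_min:
  assumes i: "i \<in> {1..q}" and u: "inR (n i) u" "f i u \<noteq> \<infinity>"
  shows "f i (xb i) \<le> ereal (real_of_ereal (f i u) + vinner (n i) (AT i yb) u - vinner (n i) (AT i yb) (xb i))"
proof -
  have cv: "convex_fn (n i) (f i)" and pr: "proper_fn (n i) (f i)" and cl: "closed_fn (n i) (f i)"
    using f_convex f_proper f_closed i by auto
  define b where "b = real_of_ereal (f i u)"
  define V where "V j = vinner (n i) (\<lambda>t. xhat i (int (\<sigma> j)) t - x i (int (\<sigma> j) + 1) t)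
                                   (\<lambda>t. u t - x i (int (\<sigma> j) + 1) t)" for j
  define V0 where "V0 = - \<eta> * (vinner (n i) (AT i yb) u - vinner (n i) (AT i yb) (xb i))"
  have fin: "inR (n i) (x i (int (\<sigma> j) + 1)) \<and> \<bar>f i (x i (int (\<sigma> j) + 1))\<bar> \<noteq> \<infinity>" for j
    using prox_argmin_finite[OF pr eta(1) prox_step[OF _ i]] by simp
  have le: "f i (x i (int (\<sigma> j) + 1)) \<le> ereal (b - V j / \<eta>)" for j
  proof -
    obtain a where a: "f i (x i (int (\<sigma> j) + 1)) = ereal a" using fin[of j] by force
    have "\<eta> * real_of_ereal (f i (x i (int (\<sigma> j) + 1))) + V j \<le> \<eta> * b"
      unfolding V_def b_def by (rule prox_variational_ineq[OF cv pr eta(1) prox_step[OF _ i] u]) simp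
    then show ?thesis unfolding a using eta(1) by (simp add: field_simps)
  qed
  have "V \<longlonglongrightarrow> vinner (n i) (\<lambda>t. xb i t - 2 * \<eta> * AT i yb t + \<eta> * AT i yb t - xb i t) (\<lambda>t. u t - xb i t)"
    unfolding V_def vinner_def xhat_def
    using x_lim[of 0 i] x_lim[of 1 i] AT_shift_tendsto[of 0 i] AT_shift_tendsto[of "-1" i] i
    by (intro tendsto_intros) auto
  also have "vinner (n i) (\<lambda>t. xb i t - 2 * \<eta> * AT i yb t + \<eta> * AT i yb t - xb i t) (\<lambda>t. u t - xb i t) = V0"
    unfolding V0_def vinner_def by (simp add: sum_subtractf[symmetric] sum_distrib_left algebra_simps)
  finally have V: "V \<longlonglongrightarrow> V0" .
  have "f i (xb i) \<le> liminf (\<lambda>j. f i (x i (int (\<sigma> j) + 1)))"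
    using cl xb[of i] fin x_lim[of 1 i] i unfolding closed_fn_def by auto
  also have "\<dots> \<le> liminf (\<lambda>j. ereal (b - V j / \<eta>))"
    by (rule Liminf_mono) (use le in auto)
  also have "\<dots> = ereal (b - V0 / \<eta>)"
    by (rule lim_imp_Liminf) (use eta(1) in \<open>auto intro!: tendsto_intros V\<close>)
  also have "b - V0 / \<eta> = real_of_ereal (f i u) + vinner (n i) (AT i yb) u - vinner (n i) (AT i yb) (xb i)"
    unfolding V0_def b_def using eta(1) by (simp add: field_simps)
  finally show ?thesis .
qed

lemma cluster_point_kkt: "kkt_point xb yb"
  unfolding kkt_point_def
proof (intro conjI ballI allI impI)
  fix i assume i: "i \<in> {1..q}"
  obtain w where "inR (n i) w" "f i w \<noteq> \<infinity>" using f_proper i unfolding proper_fn_def by blast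
  from cluster_point_blockwise_min[OF i this] show fin: "f i (xb i) \<noteq> \<infinity>" by auto
  fix u assume u: "inR (n i) u"
  show "f i (xb i) + ereal (vinner (n i) (AT i yb) (xb i)) \<le> f i u + ereal (vinner (n i) (AT i yb) u)"
  proof (cases "f i u = \<infinity>")
    case False
    then obtain b where "f i u = ereal b" using f_neq_minf[OF i u] by (cases "f i u") auto
    moreover obtain a where "f i (xb i) = ereal a" using fin f_neq_minf[OF i xb] by (cases "f i (xb i)") auto
    ultimately show ?thesis using cluster_point_blockwise_min[OF i u False] by simp
  qed simp
qed (use xb yb cluster_point_feasible in auto)

end

lemma iterates_converge_to_kkt_point:
  assumes "kkt_point xs ys"
  shows "\<exists>xb yb. kkt_point xb yb \<and> (\<forall>i\<in>{1..q}. \<forall>t<n i. (\<lambda>k. x i (int k) t) \<longlonglongrightarrow> xb i t)"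
proof -
  interpret C0: reflected_iteration zdim "M0 q n p A" Lt \<eta> Z "blk_vec q n p xs ys"
    by (rule reflected_iteration_at_kkt_point[OF assms])
  obtain \<sigma> Zb where \<sigma>: "strict_mono \<sigma>"
    and lim: "\<And>r s. r < zdim \<Longrightarrow> s \<in> {-1, 0, 1} \<Longrightarrow> (\<lambda>j. Z (int (\<sigma> j) + s) r) \<longlonglongrightarrow> Zb r"
    using C0.cluster_point_with_neighbours by blast
  define xb where "xb i = sub_vec (blk_off n i) (n i) Zb" for i
  define yb where "yb = sub_vec (blk_off n (Suc q)) p Zb"
  have Zb: "blk_vec q n p xb yb r = Zb r" if "r < zdim" for r
    unfolding xb_def yb_def using blk_vec_sub_vec[OF that] .
  have x_lim: "(\<lambda>j. x i (int (\<sigma> j) + s) t) \<longlonglongrightarrow> xb i t"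
    if "s \<in> {-1, 0, 1}" "i \<in> {1..q}" "t < n i" for s i t
    using lim[OF _ that(1), of "blk_off n i + t"] blk_off_add_less[of i q t n, OF that(2,3)] that(2,3)
    by (simp add: blk_vec_block xb_def sub_vec_def)
  have y_lim: "(\<lambda>j. y (int (\<sigma> j) + s) t) \<longlonglongrightarrow> yb t" if "s \<in> {-1, 0, 1}" "t < p" for s t
    using lim[OF _ that(1), of "blk_off n (Suc q) + t"] that(2)
    by (simp add: blk_vec_last yb_def sub_vec_def)
  have kkt: "kkt_point xb yb"
    by (rule cluster_point_kkt[OF x_lim y_lim]) (auto simp: xb_def yb_def inR_sub_vec)
  interpret C1: reflected_iteration zdim "M0 q n p A" Lt \<eta> Z "blk_vec q n p xb yb"
    by (rule reflected_iteration_at_kkt_point[OF kkt])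
  have sub: "(\<lambda>j. Z (int (\<sigma> j)) r) \<longlonglongrightarrow> blk_vec q n p xb yb r" if "r < zdim" for r
    using lim[OF that, of 0] Zb[OF that] by simp
  have "(\<lambda>k. x i (int k) t) \<longlonglongrightarrow> xb i t" if i: "i \<in> {1..q}" and t: "t < n i" for i t
  proof -
    have "blk_off n i + t < zdim" using blk_off_add_less[of i q t n, OF i t] by simp
    from C1.tendsto_centre_if_subseq_tendsto[OF \<sigma> sub this] show ?thesis
      using i t by (simp add: blk_vec_block)
  qed
  with kkt show ?thesis by blast
qed

end

theorem corollary2:
  fixes q p :: nat
    and n :: "nat \<Rightarrow> nat"
    and f :: "nat \<Rightarrow> (nat \<Rightarrow> real) \<Rightarrow> ereal"
    and A :: "nat \<Rightarrow> nat \<Rightarrow> nat \<Rightarrow> real"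
    and c :: "nat \<Rightarrow> real"
    and Lt \<eta> :: real
    and x :: "nat \<Rightarrow> int \<Rightarrow> nat \<Rightarrow> real"
    and y :: "int \<Rightarrow> nat \<Rightarrow> real"
  assumes f_proper: "\<forall>i\<in>{1..q}. proper_fn (n i) (f i)"
    and f_closed: "\<forall>i\<in>{1..q}. closed_fn (n i) (f i)"
    and f_convex: "\<forall>i\<in>{1..q}. convex_fn (n i) (f i)"
    and c_in: "inR p c"
    and saddle: "\<exists>xs ys. (\<forall>i\<in>{1..q}. inR (n i) (xs i)) \<and> inR p ys \<and>
        (\<forall>xx yy. (\<forall>i\<in>{1..q}. inR (n i) (xx i)) \<longrightarrow> inR p yy \<longrightarrow>
           (\<Sum>i\<in>{1..q}. f i (xs i)) + ereal (vinner p yy (\<lambda>r. (\<Sum>i\<in>{1..q}. mat_vec p (n i) (A i) (xs i) r) - c r))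
             \<le> (\<Sum>i\<in>{1..q}. f i (xs i)) + ereal (vinner p ys (\<lambda>r. (\<Sum>i\<in>{1..q}. mat_vec p (n i) (A i) (xs i) r) - c r))
           \<and> (\<Sum>i\<in>{1..q}. f i (xs i)) + ereal (vinner p ys (\<lambda>r. (\<Sum>i\<in>{1..q}. mat_vec p (n i) (A i) (xs i) r) - c r))
             \<le> (\<Sum>i\<in>{1..q}. f i (xx i)) + ereal (vinner p ys (\<lambda>r. (\<Sum>i\<in>{1..q}. mat_vec p (n i) (A i) (xx i) r) - c r)))"
    and Lt_pos: "Lt > 0"
    and M0_bound: "spec_norm (blk_off n (q+1) + p) (blk_off n (q+1) + p) (M0 q n p A) \<le> Lt"
    and eta: "0 < \<eta>" "\<eta> < 1 / (2 * Lt)"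
    and init_x: "\<forall>i\<in>{1..q}. inR (n i) (x i 0) \<and> inR (n i) (x i (-1))"
    and init_y: "inR p (y 0) \<and> inR p (y (-1))"
    and x_step: "\<forall>k\<ge>0. \<forall>i\<in>{1..q}.
        (let xhat = (\<lambda>j. x i k j - 2 * \<eta> * mat_vec (n i) p (transp (A i)) (y k) j
                          + \<eta> * mat_vec (n i) p (transp (A i)) (y (k - 1)) j)
         in is_arg_min (\<lambda>u. ereal \<eta> * f i u + ereal ((1/2) * (vnorm (n i) (\<lambda>j. u j - xhat j))\<^sup>2))
                       (inR (n i)) (x i (k + 1)))"
    and y_step: "\<forall>k\<ge>0. y (k + 1) = (\<lambda>r. y k r
        + 2 * \<eta> * (\<Sum>i\<in>{1..q}. mat_vec p (n i) (A i) (x i k) r)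
        - \<eta> * (\<Sum>i\<in>{1..q}. mat_vec p (n i) (A i) (x i (k - 1)) r)
        - \<eta> * c r)"
  shows "\<exists>xs. (\<forall>i\<in>{1..q}. inR (n i) (xs i) \<and> (\<forall>j<n i. (\<lambda>k::nat. x i (int k) j) \<longlonglongrightarrow> xs i j)) \<and>
           (\<forall>r<p. (\<Sum>i\<in>{1..q}. mat_vec p (n i) (A i) (xs i) r) = c r) \<and>
           (\<forall>xx. (\<forall>i\<in>{1..q}. inR (n i) (xx i)) \<longrightarrow>
                 (\<forall>r<p. (\<Sum>i\<in>{1..q}. mat_vec p (n i) (A i) (xx i) r) = c r) \<longrightarrow>
                 (\<Sum>i\<in>{1..q}. f i (xs i)) \<le> (\<Sum>i\<in>{1..q}. f i (xx i)))"
proof -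
  interpret frb_problem q p n f A c Lt \<eta> x y
    using f_proper f_closed f_convex Lt_pos M0_bound eta x_step y_step by unfold_locales
  obtain xs ys where xs: "\<forall>i\<in>{1..q}. inR (n i) (xs i)" and ys: "inR p ys"
    and sd: "\<And>xx yy. \<forall>i\<in>{1..q}. inR (n i) (xx i) \<Longrightarrow> inR p yy \<Longrightarrow>
               lagrangian xs yy \<le> lagrangian xs ys \<and> lagrangian xs ys \<le> lagrangian xx ys"
    using saddle unfolding lagrangian_def Ax_def by blast
  obtain xb yb where kkt: "kkt_point xb yb"
    and lim: "\<forall>i\<in>{1..q}. \<forall>t<n i. (\<lambda>k. x i (int k) t) \<longlonglongrightarrow> xb i t"
    using iterates_converge_to_kkt_point[OF kkt_point_if_saddle_point[OF xs ys sd]] by blast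
  have "\<forall>i\<in>{1..q}. inR (n i) (xb i)" and "\<forall>r<p. Ax xb r = c r"
    using kkt unfolding kkt_point_def by auto
  moreover have "(\<Sum>i\<in>{1..q}. f i (xb i)) \<le> (\<Sum>i\<in>{1..q}. f i (xx i))"
    if "\<forall>i\<in>{1..q}. inR (n i) (xx i)" "\<forall>r<p. Ax xx r = c r" for xx
    by (rule kkt_point_optimal[OF kkt that])
  ultimately show ?thesis
    using lim unfolding Ax_def by blast
qed

end
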